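(* Let $n\ge2$, $N\ge1$, $L>0$, $h=L/N$, $\Delta t>0$, and let $b_{ij}>0$ with $b_{ij}=b_{ji}$ for $i\neq j$, $i,j=1,\dots,n$. Let $\rho^k=(\rho^k_1,\dots,\rho^k_n)$ be cell-centered with $\rho^k_{i,\ell}>0$ for all $i,\ell$ and $\sum_{i=1}^n\rho^k_{i,\ell}=1$ for all $\ell$. Then there exists $\delta_0>0$ such that for every $0<\delta\le\delta_0$: an $n$-tuple $\rho^{k+1}$ of cell-centered grid functions with $\rho^{k+1}_{i,\ell}>0$ for all $i,\ell$ is a solution of the scheme (i.e. there is an $n$-tuple $v^{k+1}$ of edge-centered grid functions such that for all $i$ and $\ell$ $$\frac{\rho^{k+1}_{i,\ell}-\rho^k_{i,\ell}}{\Delta t}+\big(d_h(\hat\rho^k_iv^{k+1}_i)\big)_\ell=0,$$ $$-\sum_{j=1}^nb_{ij}\hat\rho^k_{j,\ell+\frac12}\big(v^{k+1}_{i,\ell+\frac12}-v^{k+1}_{j,\ell+\frac12}\big)=\big(D_h\log\rho^{k+1}_i\big)_{\ell+\frac12}-\frac{1}{\sum_{j=1}^n\hat\rho^k_{j,\ell+\frac12}}\sum_{j=1}^n\hat\rho^k_{j,\ell+\frac12}\big(D_h\log\rho^{k+1}_j\big)_{\ell+\frac12},$$ $$\sum_{j=1}^n\hat\rho^k_{j,\ell+\frac12}v^{k+1}_{j,\ell+\frac12}=0\,)$$ if and only if $\rho^{k+1}$ is the $\rho$-component of a minimizer $(\rho,w)$ over the set $K_\delta$ of the functional $$J(\rho,w)=\frac{1}{4\Delta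 t}\,h\sum_{\ell=1}^N\sum_{i,j=1}^nb_{ij}\hat\rho^k_{i,\ell+\frac12}\hat\rho^k_{j,\ell+\frac12}\big(w_{i,\ell+\frac12}-w_{j,\ell+\frac12}\big)^2+h\sum_{\ell=1}^N\sum_{i=1}^n\rho_{i,\ell}\log\rho_{i,\ell},$$ where $K_\delta$ is the set of pairs $(\rho,w)$, $\rho$ an $n$-tuple of cell-centered and $w$ an $n$-tuple of edge-centered grid functions, such that for all $i=1,\dots,n$ and $\ell=1,\dots,N$: $\rho_{i,\ell}\ge\delta$, $\rho_{i,\ell}-\rho^k_{i,\ell}+\big(d_h(\hat\rho^k_iw_i)\big)_\ell=0$, $\sum_{i=1}^n\hat\rho^k_{i,\ell+\frac12}w_{i,\ell+\frac12}=0$, and $\sum_{i=1}^n\rho_{i,\ell}=1$.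
   Context: Grid on the torus $[0,L]$ with $N$ intervals, $h=L/N$: cell-centered grid functions are $N$-periodic sequences $(f_\ell)_{\ell\in\mathbb Z}$ (values at $\ell h$); edge-centered ones are $N$-periodic sequences $(f_{\ell+\frac12})$ (values at $(\ell+\frac12)h$). For edge-centered $\phi$, $(d_h\phi)_\ell=(\phi_{\ell+\frac12}-\phi_{\ell-\frac12})/h$; for cell-centered $f$, $(D_hf)_{\ell+\frac12}=(f_{\ell+1}-f_\ell)/h$ and $\hat f_{\ell+\frac12}=(f_\ell+f_{\ell+1})/2$. Products and logarithms are pointwise; terms with $j=i$ vanish, so $b_{ii}$ plays no role. *)

theory Defs
  imports Complex_Main
begin

(* Grid functions on the torus are N-periodic functions int => real.
   Cell-centered f: f l is the value at l*h.
   Edge-centered phi: phi l is the value at (l+1/2)*h, i.e. phi l = phi_{l+1/2}. *)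

definition periodic_grid :: "nat \<Rightarrow> (int \<Rightarrow> real) \<Rightarrow> bool" where
  "periodic_grid N f \<longleftrightarrow> (\<forall>l. f (l + int N) = f l)"

definition d_h :: "real \<Rightarrow> (int \<Rightarrow> real) \<Rightarrow> int \<Rightarrow> real" where
  "d_h h phi l = (phi l - phi (l - 1)) / h"

definition D_h :: "real \<Rightarrow> (int \<Rightarrow> real) \<Rightarrow> int \<Rightarrow> real" where
  "D_h h f l = (f (l + 1) - f l) / h"

definition hat :: "(int \<Rightarrow> real) \<Rightarrow> int \<Rightarrow> real" where
  "hat f l = (f l + f (l + 1)) / 2"

definition scheme_solution ::
  "nat \<Rightarrow> nat \<Rightarrow> real \<Rightarrow> real \<Rightarrow> (nat \<Rightarrow> nat \<Rightarrow> real) \<Rightarrow>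
   (nat \<Rightarrow> int \<Rightarrow> real) \<Rightarrow> (nat \<Rightarrow> int \<Rightarrow> real) \<Rightarrow> bool" where
  "scheme_solution n N h dt b rk r \<longleftrightarrow>
    (\<exists>v :: nat \<Rightarrow> int \<Rightarrow> real.
      (\<forall>i\<in>{1..n}. periodic_grid N (v i)) \<and>
      (\<forall>i\<in>{1..n}. \<forall>l::int.
         (r i l - rk i l) / dt + d_h h (\<lambda>m. hat (rk i) m * v i m) l = 0 \<and>
         - (\<Sum>j\<in>{1..n}. b i j * hat (rk j) l * (v i l - v j l))
           = D_h h (\<lambda>m. ln (r i m)) l
             - (1 / (\<Sum>j\<in>{1..n}. hat (rk j) l))
               * (\<Sum>j\<in>{1..n}. hat (rk j) l * D_h h (\<lambda>m. ln (r j m)) l)) \<and>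
      (\<forall>l::int. (\<Sum>j\<in>{1..n}. hat (rk j) l * v j l) = 0))"

definition J_fun ::
  "nat \<Rightarrow> nat \<Rightarrow> real \<Rightarrow> real \<Rightarrow> (nat \<Rightarrow> nat \<Rightarrow> real) \<Rightarrow>
   (nat \<Rightarrow> int \<Rightarrow> real) \<Rightarrow> (nat \<Rightarrow> int \<Rightarrow> real) \<Rightarrow> (nat \<Rightarrow> int \<Rightarrow> real) \<Rightarrow> real" where
  "J_fun n N h dt b rk r w =
     1 / (4 * dt) * h * (\<Sum>l\<in>{1..int N}. \<Sum>i\<in>{1..n}. \<Sum>j\<in>{1..n}.
        b i j * hat (rk i) l * hat (rk j) l * (w i l - w j l)^2)
     + h * (\<Sum>l\<in>{1..int N}. \<Sum>i\<in>{1..n}. r i l * ln (r i l))"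

definition K_set ::
  "nat \<Rightarrow> nat \<Rightarrow> real \<Rightarrow> real \<Rightarrow> (nat \<Rightarrow> int \<Rightarrow> real) \<Rightarrow>
   ((nat \<Rightarrow> int \<Rightarrow> real) \<times> (nat \<Rightarrow> int \<Rightarrow> real)) set" where
  "K_set n N h \<delta> rk = {(r, w).
     (\<forall>i\<in>{1..n}. periodic_grid N (r i) \<and> periodic_grid N (w i)) \<and>
     (\<forall>i\<in>{1..n}. \<forall>l\<in>{1..int N}.
        r i l \<ge> \<delta> \<and> r i l - rk i l + d_h h (\<lambda>m. hat (rk i) m * w i m) l = 0) \<and>
     (\<forall>l\<in>{1..int N}. (\<Sum>i\<in>{1..n}. hat (rk i) l * w i l) = 0 \<and>
                      (\<Sum>i\<in>{1..n}. r i l) = 1)}"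

end

theory Submission
  imports Defs
begin

text \<open>
  Write \<open>\<eta>\<^sub>i = hat (rk i)\<close> for the edge values of the previous step \<open>\<rho>\<^sup>k\<close>.
  \<open>J\<close> is a positive semidefinite quadratic form in \<open>w\<close> (as \<open>b\<^sub>i\<^sub>j > 0\<close>) plus the entropy
  \<open>h \<Sum> \<rho> ln \<rho>\<close>, hence convex, and all constraints of \<open>K\<^sub>\<delta>\<close> except \<open>\<rho> \<ge> \<delta>\<close> are affine.
  Along an admissible direction \<open>(\<sigma>, d)\<close>, i.e. \<open>\<sigma>\<^sub>i = - d\<^sub>h (\<eta>\<^sub>i d\<^sub>i)\<close> and \<open>\<Sum>\<^sub>i \<eta>\<^sub>i d\<^sub>i = 0\<close>,
  summation by parts turns the first variation of \<open>J\<close> into \<open>h \<Sum>\<^sub>\<ell> \<Sum>\<^sub>i \<eta>\<^sub>i d\<^sub>i G\<^sub>i\<close> with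
  \<open>G\<^sub>i = D\<^sub>h ln \<rho>\<^sub>i + (1/\<Delta>t) \<Sum>\<^sub>j b\<^sub>i\<^sub>j \<eta>\<^sub>j (w\<^sub>i - w\<^sub>j)\<close>. By convexity, \<open>(\<rho>, w)\<close> is a minimizer
  as soon as \<open>G\<^sub>i\<close> does not depend on \<open>i\<close>; conversely, at a minimizer with \<open>\<rho> > \<delta>\<close>,
  the directions exchanging flux between two species across one edge show that all \<open>G\<^sub>i\<close>
  agree. As \<open>\<Sum>\<^sub>i \<eta>\<^sub>i G\<^sub>i = \<Sum>\<^sub>i \<eta>\<^sub>i D\<^sub>h ln \<rho>\<^sub>i\<close> and \<open>\<Sum>\<^sub>i \<eta>\<^sub>i = 1\<close>, this condition with
  \<open>v = w / \<Delta>t\<close> is exactly the scheme.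

  For \<open>\<delta> \<le> \<delta>\<^sub>0\<close> the constraint \<open>\<rho> \<ge> \<delta>\<close> never binds: if some component of \<open>\<rho>\<close> equals
  \<open>a \<le> \<delta>\<^sub>0\<close>, then \<open>((1 - a) \<rho> + a \<rho>\<^sup>k, (1 - a) w)\<close> is admissible with smaller \<open>J\<close>: the
  quadratic part is multiplied by \<open>(1 - a)\<^sup>2\<close>, and by convexity the entropy changes by at most
  \<open>a (n N (- ln m) + (m / 2) ln (2 a)) < 0\<close>, where \<open>m = min \<rho>\<^sup>k\<close>.
\<close>

section \<open>Periodic grid functions\<close>

lemma periodic_grid_shift:
  assumes "periodic_grid N f"
  shows "f (l + int N * k) = f l"
proof (induction k rule: int_induct[where k = 0])
  case (step1 k)
  have "f (l + int N * (k + 1)) = f (l + int N * k + int N)"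
    by (simp add: algebra_simps)
  with step1 assms show ?case
    unfolding periodic_grid_def by simp
next
  case (step2 k)
  have "f (l + int N * k) = f (l + int N * (k - 1) + int N)"
    by (simp add: algebra_simps)
  with step2 assms show ?case
    unfolding periodic_grid_def by simp
qed simp

lemma periodic_grid_eqI:
  assumes "0 < N" "periodic_grid N f" "periodic_grid N g"
    and "\<forall>l\<in>{1..int N}. f l = g l"
  shows "f = g"
proof
  fix l
  define l' where "l' = (l - 1) mod int N + 1"
  have "(l - 1) mod int N < int N" "0 \<le> (l - 1) mod int N"
    using \<open>0 < N\<close> by simp_all
  then have "l' \<in> {1..int N}"
    by (simp add: l'_def)
  moreover have "l = l' + int N * ((l - 1) div int N)"
    unfolding l'_def using div_mult_mod_eq[of "l - 1" "int N"] by (simp add: algebra_simps)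
  ultimately show "f l = g l"
    using assms periodic_grid_shift[of N f l'] periodic_grid_shift[of N g l'] by metis
qed

lemma grid_mod_eq_iff:
  assumes "l \<in> {1..int N}" "l' \<in> {1..int N}"
  shows "l mod int N = l' mod int N \<longleftrightarrow> l = l'"
proof
  assume "l mod int N = l' mod int N"
  then have "int N dvd l - l'"
    by (simp add: mod_eq_dvd_iff)
  moreover have "\<bar>l - l'\<bar> < int N"
    using assms by auto
  ultimately show "l = l'"
    using dvd_imp_le_int[of "l - l'" "int N"] by fastforce
qed simp

lemma periodic_grid_const: "periodic_grid N (\<lambda>l. c)"
  unfolding periodic_grid_def by simp

lemma periodic_grid_add:
  "periodic_grid N f \<Longrightarrow> periodic_grid N g \<Longrightarrow> periodic_grid N (\<lambda>l. f l + g l)"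
  unfolding periodic_grid_def by simp

lemma periodic_grid_diff:
  "periodic_grid N f \<Longrightarrow> periodic_grid N g \<Longrightarrow> periodic_grid N (\<lambda>l. f l - g l)"
  unfolding periodic_grid_def by simp

lemma periodic_grid_mult:
  "periodic_grid N f \<Longrightarrow> periodic_grid N g \<Longrightarrow> periodic_grid N (\<lambda>l. f l * g l)"
  unfolding periodic_grid_def by simp

lemma periodic_grid_sum:
  "(\<And>j. j \<in> A \<Longrightarrow> periodic_grid N (f j)) \<Longrightarrow> periodic_grid N (\<lambda>l. \<Sum>j\<in>A. f j l)"
  unfolding periodic_grid_def by simp

lemma periodic_grid_ln: "periodic_grid N f \<Longrightarrow> periodic_grid N (\<lambda>l. ln (f l))"
  unfolding periodic_grid_def by simp

lemma periodic_grid_translate: "periodic_grid N f \<Longrightarrow> periodic_grid N (\<lambda>l. f (l + c))"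
  unfolding periodic_grid_def by (metis add.assoc add.commute)

lemma periodic_grid_hat: "periodic_grid N f \<Longrightarrow> periodic_grid N (hat f)"
  using periodic_grid_translate[of N f 1] unfolding periodic_grid_def hat_def by simp

lemma periodic_grid_d_h: "periodic_grid N f \<Longrightarrow> periodic_grid N (d_h h f)"
  using periodic_grid_translate[of N f "- 1"] unfolding periodic_grid_def d_h_def by simp

lemma periodic_grid_D_h: "periodic_grid N f \<Longrightarrow> periodic_grid N (D_h h f)"
  using periodic_grid_translate[of N f 1] unfolding periodic_grid_def D_h_def by simp

lemmas periodic_grid_intros =
  periodic_grid_const periodic_grid_add periodic_grid_diff periodic_grid_mult
  periodic_grid_sum periodic_grid_ln periodic_grid_hat periodic_grid_d_h periodic_grid_D_h

lemma d_h_add: "d_h h (\<lambda>m. f m + g m) l = d_h h f l + d_h h g l"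
  unfolding d_h_def by (metis add_diff_add add_divide_distrib)

lemma d_h_diff: "d_h h (\<lambda>m. f m - g m) l = d_h h f l - d_h h g l"
  unfolding d_h_def by (simp add: diff_divide_distrib)

lemma d_h_cmult: "d_h h (\<lambda>m. c * f m) l = c * d_h h f l"
  unfolding d_h_def by (simp add: algebra_simps)

lemma d_h_sum: "d_h h (\<lambda>m. \<Sum>i\<in>A. f i m) l = (\<Sum>i\<in>A. d_h h (f i) l)"
  unfolding d_h_def by (simp add: sum_divide_distrib[symmetric] sum_subtractf)

lemma sum_telescope_int:
  fixes F :: "int \<Rightarrow> 'a::ab_group_add"
  shows "(\<Sum>l\<in>{1..int N}. F l - F (l - 1)) = F (int N) - F 0"
proof (induction N)
  case (Suc N)
  have "{1..int (Suc N)} = insert (int N + 1) {1..int N}"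
    by auto
  with Suc show ?case
    by (simp add: add.commute)
qed simp

lemma sum_d_h_by_parts:
  assumes "periodic_grid N G" "periodic_grid N \<phi>"
  shows "(\<Sum>l\<in>{1..int N}. G l * d_h h \<phi> l) = - (\<Sum>l\<in>{1..int N}. D_h h G l * \<phi> l)"
proof -
  let ?F = "\<lambda>l. G (l + 1) * \<phi> l"
  have "(\<Sum>l\<in>{1..int N}. G l * d_h h \<phi> l) + (\<Sum>l\<in>{1..int N}. D_h h G l * \<phi> l)
      = (\<Sum>l\<in>{1..int N}. ?F l - ?F (l - 1)) / h"
    unfolding sum.distrib[symmetric] sum_divide_distrib d_h_def D_h_def
    by (rule sum.cong) (simp_all add: algebra_simps add_divide_distrib diff_divide_distrib)
  also have "\<dots> = (?F (int N) - ?F 0) / h"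
    using sum_telescope_int[of ?F N] by simp
  also have "\<dots> = 0"
    using periodic_grid_shift[OF assms(1), of 1 1] periodic_grid_shift[OF assms(2), of 0 1]
    by (simp add: add.commute)
  finally show ?thesis
    by (simp add: eq_neg_iff_add_eq_0)
qed

lemma sum_sum_antisym_mult_diff:
  fixes a :: "'a \<Rightarrow> 'a \<Rightarrow> real"
  assumes antisym: "\<And>i j. i \<in> A \<Longrightarrow> j \<in> A \<Longrightarrow> a j i = - a i j"
  shows "(\<Sum>i\<in>A. \<Sum>j\<in>A. a i j * (D i - D j)) = 2 * (\<Sum>i\<in>A. D i * (\<Sum>j\<in>A. a i j))"
proof -
  have "(\<Sum>i\<in>A. \<Sum>j\<in>A. a i j * D j) = (\<Sum>j\<in>A. \<Sum>i\<in>A. a i j * D j)"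
    by (rule sum.swap)
  also have "\<dots> = (\<Sum>j\<in>A. \<Sum>i\<in>A. - (D j * a j i))"
    using antisym by (intro sum.cong refl) (metis minus_mult_right mult.commute)
  finally have swapped: "(\<Sum>i\<in>A. \<Sum>j\<in>A. a i j * D j) = - (\<Sum>i\<in>A. D i * (\<Sum>j\<in>A. a i j))"
    by (simp add: sum_negf sum_distrib_left)
  have "(\<Sum>i\<in>A. \<Sum>j\<in>A. a i j * (D i - D j))
      = (\<Sum>i\<in>A. D i * (\<Sum>j\<in>A. a i j)) - (\<Sum>i\<in>A. \<Sum>j\<in>A. a i j * D j)"
    by (simp add: right_diff_distrib sum_subtractf sum_distrib_left mult.commute)
  with swapped show ?thesis
    by simp
qed

lemma sum_sum_antisym_eq_0:
  fixes a :: "'a \<Rightarrow> 'a \<Rightarrow> real"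
  assumes "\<And>i j. i \<in> A \<Longrightarrow> j \<in> A \<Longrightarrow> a j i = - a i j"
  shows "(\<Sum>i\<in>A. \<Sum>j\<in>A. a i j) = 0"
  using sum_sum_antisym_mult_diff[of A a "\<lambda>_. 1", OF assms] by (simp add: sum_distrib_left[symmetric])

lemma xlnx_ge_tangent:
  fixes x y :: real
  assumes "0 < x" "0 < y"
  shows "y * ln y + (ln y + 1) * (x - y) \<le> x * ln x"
proof -
  have "ln (y / x) \<le> y / x - 1"
    using assms by (intro ln_le_minus_one) simp
  then have "x * (ln y - ln x) \<le> x * (y / x - 1)"
    using assms by (intro mult_left_mono) (auto simp: ln_div)
  then show ?thesis
    using assms by (simp add: algebra_simps)
qed

lemma ln_mix_mult_diff_le:
  fixes x k a m :: real
  assumes "0 < x" "x \<le> 1" "0 < m" "m \<le> k" "k \<le> 1" "0 \<le> a" "a \<le> 1"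
  shows "ln ((1 - a) * x + a * k) * (k - x) \<le> - ln m"
proof -
  define y where "y = (1 - a) * x + a * k"
  have "0 < y"
    unfolding y_def using assms
    by (cases "a = 1") (auto intro: add_pos_nonneg add_nonneg_pos)
  have "y \<le> (1 - a) * 1 + a * 1"
    unfolding y_def using assms by (intro add_mono mult_left_mono) auto
  then have "ln y \<le> 0"
    using \<open>0 < y\<close> by simp
  have "ln m \<le> 0"
    using assms by simp
  have "ln y * (k - x) \<le> - ln m"
  proof (cases "x \<le> k")
    case True
    then show ?thesis
      using \<open>ln y \<le> 0\<close> \<open>ln m \<le> 0\<close> mult_nonpos_nonneg[of "ln y" "k - x"] by simp
  next
    case False
    have "k \<le> y"
      unfolding y_def using False assms mult_left_mono[of k x "1 - a"] by (simp add: algebra_simps)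
    then have "- ln y \<le> - ln m"
      using assms by simp
    have "ln y * (k - x) = (- ln y) * (x - k)"
      by (simp add: algebra_simps)
    also have "\<dots> \<le> (- ln m) * 1"
      using \<open>- ln y \<le> - ln m\<close> \<open>ln y \<le> 0\<close> False assms by (intro mult_mono) auto
    finally show ?thesis
      by simp
  qed
  then show ?thesis
    unfolding y_def .
qed

lemma ln_mix_mult_diff_le_small:
  fixes k a m :: real
  assumes "0 < a" "a \<le> m / 2" "a \<le> 1 / 4" "m \<le> k" "k \<le> 1"
  shows "ln ((1 - a) * a + a * k) * (k - a) \<le> m / 2 * ln (2 * a)"
proof -
  define y where "y = (1 - a) * a + a * k"
  have "0 < y"
    unfolding y_def using assms by (simp add: add_pos_pos)
  have "y \<le> 1 * a + a * 1"
    unfolding y_def using assms by (intro add_mono mult_right_mono mult_left_mono) auto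
  then have "ln y \<le> ln (2 * a)"
    using \<open>0 < y\<close> by simp
  have "ln (2 * a) < 0"
    using assms by simp
  have "ln y * (k - a) \<le> ln (2 * a) * (k - a)"
    using \<open>ln y \<le> ln (2 * a)\<close> assms by (intro mult_right_mono) auto
  also have "\<dots> \<le> ln (2 * a) * (m / 2)"
    using \<open>ln (2 * a) < 0\<close> assms by (intro mult_left_mono_neg) auto
  finally show ?thesis
    unfolding y_def by (simp add: mult.commute)
qed

section \<open>The minimization problem\<close>

locale maxwell_stefan_step =
  fixes n N :: nat and h dt :: real
    and b :: "nat \<Rightarrow> nat \<Rightarrow> real" and rk :: "nat \<Rightarrow> int \<Rightarrow> real"
  assumes N_pos: "0 < N" and h_pos: "0 < h" and dt_pos: "0 < dt"
    and b_sym: "\<And>i j. i \<in> {1..n} \<Longrightarrow> j \<in> {1..n} \<Longrightarrow> i \<noteq> j \<Longrightarrow> b i j = b j i"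
    and b_nonneg: "\<And>i j. i \<in> {1..n} \<Longrightarrow> j \<in> {1..n} \<Longrightarrow> i \<noteq> j \<Longrightarrow> 0 \<le> b i j"
    and rk_periodic: "\<And>i. i \<in> {1..n} \<Longrightarrow> periodic_grid N (rk i)"
    and rk_pos: "\<And>i l. i \<in> {1..n} \<Longrightarrow> 0 < rk i l"
    and rk_sum: "\<And>l. (\<Sum>i\<in>{1..n}. rk i l) = 1"
begin

abbreviation J where "J \<equiv> J_fun n N h dt b rk"

lemma hat_rk_pos: "i \<in> {1..n} \<Longrightarrow> 0 < hat (rk i) l"
  unfolding hat_def using rk_pos by (simp add: add_pos_pos)

lemma hat_rk_sum: "(\<Sum>i\<in>{1..n}. hat (rk i) l) = 1"
  unfolding hat_def using rk_sum by (simp add: sum.distrib sum_divide_distrib[symmetric])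

lemma coupling_nonneg:
  "i \<in> {1..n} \<Longrightarrow> j \<in> {1..n} \<Longrightarrow> i \<noteq> j \<Longrightarrow> 0 \<le> b i j * hat (rk i) l * hat (rk j) l"
  using b_nonneg hat_rk_pos by (simp add: less_imp_le)

lemma coupling_antisym:
  "i \<in> {1..n} \<Longrightarrow> j \<in> {1..n} \<Longrightarrow>
     b j i * x j * x i * (y j - y i) = - (b i j * x i * x j * (y i - y j))"
  by (cases "i = j") (simp_all add: b_sym algebra_simps)

definition feasible :: "(nat \<Rightarrow> int \<Rightarrow> real) \<Rightarrow> (nat \<Rightarrow> int \<Rightarrow> real) \<Rightarrow> bool" where
  "feasible r w \<longleftrightarrow>
     (\<forall>i\<in>{1..n}. periodic_grid N (r i) \<and> periodic_grid N (w i)) \<and>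
     (\<forall>i\<in>{1..n}. \<forall>l\<in>{1..int N}. r i l - rk i l + d_h h (\<lambda>m. hat (rk i) m * w i m) l = 0) \<and>
     (\<forall>l\<in>{1..int N}. (\<Sum>i\<in>{1..n}. hat (rk i) l * w i l) = 0 \<and> (\<Sum>i\<in>{1..n}. r i l) = 1)"

definition feasible_direction :: "(nat \<Rightarrow> int \<Rightarrow> real) \<Rightarrow> (nat \<Rightarrow> int \<Rightarrow> real) \<Rightarrow> bool" where
  "feasible_direction \<rho> d \<longleftrightarrow>
     (\<forall>i\<in>{1..n}. periodic_grid N (\<rho> i) \<and> periodic_grid N (d i)) \<and>
     (\<forall>i\<in>{1..n}. \<forall>l\<in>{1..int N}. \<rho> i l + d_h h (\<lambda>m. hat (rk i) m * d i m) l = 0) \<and>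
     (\<forall>l\<in>{1..int N}. (\<Sum>i\<in>{1..n}. hat (rk i) l * d i l) = 0 \<and> (\<Sum>i\<in>{1..n}. \<rho> i l) = 0)"

lemma K_set_iff:
  "(r, w) \<in> K_set n N h \<delta> rk \<longleftrightarrow> feasible r w \<and> (\<forall>i\<in>{1..n}. \<forall>l\<in>{1..int N}. \<delta> \<le> r i l)"
  unfolding K_set_def feasible_def by auto

lemma feasible_rk: "feasible rk (\<lambda>_ _. 0)"
  unfolding feasible_def d_h_def using rk_periodic rk_sum by (simp add: periodic_grid_const)

lemma feasible_direction_diff:
  assumes "feasible r w" "feasible r' w'"
  shows "feasible_direction (\<lambda>i l. r' i l - r i l) (\<lambda>i l. w' i l - w i l)"
proof -
  have "r' i l - r i l + d_h h (\<lambda>m. hat (rk i) m * (w' i m - w i m)) l = 0"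
    if "i \<in> {1..n}" "l \<in> {1..int N}" for i l
  proof -
    have "r i l - rk i l + d_h h (\<lambda>m. hat (rk i) m * w i m) l = 0"
      "r' i l - rk i l + d_h h (\<lambda>m. hat (rk i) m * w' i m) l = 0"
      using assms that unfolding feasible_def by auto
    then show ?thesis
      using d_h_diff[of h "\<lambda>m. hat (rk i) m * w' i m" "\<lambda>m. hat (rk i) m * w i m"]
      by (simp add: right_diff_distrib)
  qed
  with assms show ?thesis
    unfolding feasible_def feasible_direction_def
    by (auto simp: periodic_grid_diff right_diff_distrib sum_subtractf)
qed

lemma feasible_add_direction:
  assumes "feasible r w" "feasible_direction \<rho> d"
  shows "feasible (\<lambda>i l. r i l + e * \<rho> i l) (\<lambda>i l. w i l + e * d i l)"
proof -
  have "r i l + e * \<rho> i l - rk i l + d_h h (\<lambda>m. hat (rk i) m * (w i m + e * d i m)) l = 0"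
    if "i \<in> {1..n}" "l \<in> {1..int N}" for i l
  proof -
    have "r i l - rk i l + d_h h (\<lambda>m. hat (rk i) m * w i m) l = 0"
      "\<rho> i l = - d_h h (\<lambda>m. hat (rk i) m * d i m) l"
      using assms that unfolding feasible_def feasible_direction_def by (auto simp: eq_neg_iff_add_eq_0)
    then show ?thesis
      using d_h_add[of h "\<lambda>m. hat (rk i) m * w i m" "\<lambda>m. e * (hat (rk i) m * d i m)"]
      by (simp add: d_h_cmult distrib_left mult.left_commute algebra_simps)
  qed
  moreover have "(\<Sum>i\<in>{1..n}. hat (rk i) l * (w i l + e * d i l))
      = (\<Sum>i\<in>{1..n}. hat (rk i) l * w i l) + e * (\<Sum>i\<in>{1..n}. hat (rk i) l * d i l)"
    "(\<Sum>i\<in>{1..n}. r i l + e * \<rho> i l) = (\<Sum>i\<in>{1..n}. r i l) + e * (\<Sum>i\<in>{1..n}. \<rho> i l)" for l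
    by (simp_all add: distrib_left sum.distrib sum_distrib_left mult.left_commute)
  ultimately show ?thesis
    using assms unfolding feasible_def feasible_direction_def
    by (auto simp: periodic_grid_add periodic_grid_mult periodic_grid_const)
qed

lemma feasible_mix:
  assumes "feasible r w"
  shows "feasible (\<lambda>i l. (1 - a) * r i l + a * rk i l) (\<lambda>i l. (1 - a) * w i l)"
proof -
  have "feasible (\<lambda>i l. r i l + a * (rk i l - r i l)) (\<lambda>i l. w i l + a * (0 - w i l))"
    using assms feasible_rk by (intro feasible_add_direction feasible_direction_diff)
  then show ?thesis
    by (simp add: algebra_simps)
qed

definition dissipation :: "(nat \<Rightarrow> int \<Rightarrow> real) \<Rightarrow> real" where
  "dissipation w = (\<Sum>l\<in>{1..int N}. \<Sum>i\<in>{1..n}. \<Sum>j\<in>{1..n}.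
     b i j * hat (rk i) l * hat (rk j) l * (w i l - w j l)\<^sup>2)"

definition entropy :: "(nat \<Rightarrow> int \<Rightarrow> real) \<Rightarrow> real" where
  "entropy r = (\<Sum>l\<in>{1..int N}. \<Sum>i\<in>{1..n}. r i l * ln (r i l))"

lemma J_fun_eq: "J r w = 1 / (4 * dt) * h * dissipation w + h * entropy r"
  unfolding J_fun_def dissipation_def entropy_def ..

lemma dissipation_nonneg: "0 \<le> dissipation w"
  unfolding dissipation_def
proof (intro sum_nonneg)
  fix l i j assume "i \<in> {1..n}" "j \<in> {1..n}"
  then show "0 \<le> b i j * hat (rk i) l * hat (rk j) l * (w i l - w j l)\<^sup>2"
    using coupling_nonneg by (cases "i = j") simp_all
qed

lemma dissipation_cmult: "dissipation (\<lambda>i l. c * w i l) = c\<^sup>2 * dissipation w"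
  unfolding dissipation_def sum_distrib_left
  by (intro sum.cong refl) (simp add: power2_eq_square algebra_simps)

lemma dissipation_ge_tangent:
  "dissipation w + (\<Sum>l\<in>{1..int N}. \<Sum>i\<in>{1..n}. \<Sum>j\<in>{1..n}.
       b i j * hat (rk i) l * hat (rk j) l * (2 * (w i l - w j l) * (d i l - d j l)))
   \<le> dissipation (\<lambda>i l. w i l + d i l)"
  unfolding dissipation_def sum.distrib[symmetric]
proof (intro sum_mono)
  fix l i j assume "i \<in> {1..n}" "j \<in> {1..n}"
  let ?c = "b i j * hat (rk i) l * hat (rk j) l"
  have "?c * (w i l + d i l - (w j l + d j l))\<^sup>2
      - (?c * (w i l - w j l)\<^sup>2 + ?c * (2 * (w i l - w j l) * (d i l - d j l)))
      = ?c * (d i l - d j l)\<^sup>2"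
    by (simp add: power2_eq_square algebra_simps)
  also have "\<dots> \<ge> 0"
    using coupling_nonneg[OF \<open>i \<in> {1..n}\<close> \<open>j \<in> {1..n}\<close>] by (cases "i = j") simp_all
  finally show "?c * (w i l - w j l)\<^sup>2 + ?c * (2 * (w i l - w j l) * (d i l - d j l))
      \<le> ?c * (w i l + d i l - (w j l + d j l))\<^sup>2"
    by simp
qed

lemma entropy_ge_tangent:
  assumes "\<forall>i\<in>{1..n}. \<forall>l\<in>{1..int N}. 0 < r i l" "\<forall>i\<in>{1..n}. \<forall>l\<in>{1..int N}. 0 < r' i l"
  shows "entropy r + (\<Sum>l\<in>{1..int N}. \<Sum>i\<in>{1..n}. (ln (r i l) + 1) * (r' i l - r i l)) \<le> entropy r'"
  unfolding entropy_def sum.distrib[symmetric] using assms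
  by (intro sum_mono xlnx_ge_tangent) auto

definition first_variation ::
  "(nat \<Rightarrow> int \<Rightarrow> real) \<Rightarrow> (nat \<Rightarrow> int \<Rightarrow> real) \<Rightarrow> (nat \<Rightarrow> int \<Rightarrow> real) \<Rightarrow> (nat \<Rightarrow> int \<Rightarrow> real) \<Rightarrow> real"
where
  "first_variation r w \<rho> d =
     1 / (4 * dt) * h * (\<Sum>l\<in>{1..int N}. \<Sum>i\<in>{1..n}. \<Sum>j\<in>{1..n}.
        b i j * hat (rk i) l * hat (rk j) l * (2 * (w i l - w j l) * (d i l - d j l)))
     + h * (\<Sum>l\<in>{1..int N}. \<Sum>i\<in>{1..n}. (ln (r i l) + 1) * \<rho> i l)"

text \<open>\<open>h * flux_gradient r w i l\<close> is the derivative of \<open>J\<close> with respect to the flux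
  \<open>hat (rk i) l * w i l\<close> (see \<open>first_variation_eq\<close>).\<close>

definition flux_gradient :: "(nat \<Rightarrow> int \<Rightarrow> real) \<Rightarrow> (nat \<Rightarrow> int \<Rightarrow> real) \<Rightarrow> nat \<Rightarrow> int \<Rightarrow> real" where
  "flux_gradient r w i l =
     D_h h (\<lambda>m. ln (r i m)) l + 1 / dt * (\<Sum>j\<in>{1..n}. b i j * hat (rk j) l * (w i l - w j l))"

lemma J_ge_first_variation:
  assumes "\<forall>i\<in>{1..n}. \<forall>l\<in>{1..int N}. 0 < r i l" "\<forall>i\<in>{1..n}. \<forall>l\<in>{1..int N}. 0 < r' i l"
  shows "J r w + first_variation r w (\<lambda>i l. r' i l - r i l) (\<lambda>i l. w' i l - w i l) \<le> J r' w'"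
proof -
  let ?Q = "\<Sum>l\<in>{1..int N}. \<Sum>i\<in>{1..n}. \<Sum>j\<in>{1..n}.
       b i j * hat (rk i) l * hat (rk j) l * (2 * (w i l - w j l) * ((w' i l - w i l) - (w' j l - w j l)))"
  let ?E = "\<Sum>l\<in>{1..int N}. \<Sum>i\<in>{1..n}. (ln (r i l) + 1) * (r' i l - r i l)"
  have "dissipation w + ?Q \<le> dissipation w'"
    using dissipation_ge_tangent[of w "\<lambda>i l. w' i l - w i l"] by simp
  moreover have "entropy r + ?E \<le> entropy r'"
    using entropy_ge_tangent[OF assms] .
  ultimately have "1 / (4 * dt) * h * (dissipation w + ?Q) + h * (entropy r + ?E)
      \<le> 1 / (4 * dt) * h * dissipation w' + h * entropy r'"
    using h_pos dt_pos by (intro add_mono mult_left_mono) auto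
  then show ?thesis
    unfolding J_fun_eq first_variation_def by (simp add: distrib_left)
qed

lemma J_along_line_has_derivative:
  assumes "\<forall>i\<in>{1..n}. \<forall>l\<in>{1..int N}. 0 < r i l"
  shows "((\<lambda>e. J (\<lambda>i l. r i l + e * \<rho> i l) (\<lambda>i l. w i l + e * d i l))
           has_real_derivative first_variation r w \<rho> d) (at 0)"
proof -
  have "0 < r i l" if "i \<in> {1..n}" "l \<in> {1..int N}" for i l
    using assms that by blast
  then show ?thesis
    unfolding J_fun_def first_variation_def using dt_pos
    by (auto intro!: derivative_eq_intros sum.cong simp: algebra_simps) force
qed

lemma sum_coupling_mult_diff:
  "(\<Sum>i\<in>{1..n}. \<Sum>j\<in>{1..n}.
      b i j * hat (rk i) l * hat (rk j) l * (2 * (w i l - w j l) * (d i l - d j l)))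
   = 4 * (\<Sum>i\<in>{1..n}. hat (rk i) l * d i l * (\<Sum>j\<in>{1..n}. b i j * hat (rk j) l * (w i l - w j l)))"
proof -
  have "(\<Sum>i\<in>{1..n}. \<Sum>j\<in>{1..n}. b i j * hat (rk i) l * hat (rk j) l * (w i l - w j l) * (d i l - d j l))
      = 2 * (\<Sum>i\<in>{1..n}. d i l * (\<Sum>j\<in>{1..n}. b i j * hat (rk i) l * hat (rk j) l * (w i l - w j l)))"
    by (rule sum_sum_antisym_mult_diff) (rule coupling_antisym)
  moreover have "(\<Sum>i\<in>{1..n}. \<Sum>j\<in>{1..n}.
      b i j * hat (rk i) l * hat (rk j) l * (2 * (w i l - w j l) * (d i l - d j l)))
    = 2 * (\<Sum>i\<in>{1..n}. \<Sum>j\<in>{1..n}. b i j * hat (rk i) l * hat (rk j) l * (w i l - w j l) * (d i l - d j l))"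
    by (simp add: sum_distrib_left algebra_simps)
  moreover have "(\<Sum>i\<in>{1..n}. hat (rk i) l * d i l * (\<Sum>j\<in>{1..n}. b i j * hat (rk j) l * (w i l - w j l)))
    = (\<Sum>i\<in>{1..n}. d i l * (\<Sum>j\<in>{1..n}. b i j * hat (rk i) l * hat (rk j) l * (w i l - w j l)))"
    by (simp add: sum_distrib_left mult_ac)
  ultimately show ?thesis
    by simp
qed

lemma sum_ln_mult_direction:
  assumes dir: "feasible_direction \<rho> d" and "periodic_grid N (r i)" "i \<in> {1..n}"
  shows "(\<Sum>l\<in>{1..int N}. (ln (r i l) + 1) * \<rho> i l)
       = (\<Sum>l\<in>{1..int N}. hat (rk i) l * d i l * D_h h (\<lambda>m. ln (r i m)) l)"
proof -
  have "periodic_grid N (\<lambda>m. ln (r i m) + 1)" "periodic_grid N (\<lambda>m. hat (rk i) m * d i m)"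
    using assms rk_periodic unfolding feasible_direction_def
    by (auto intro!: periodic_grid_intros)
  moreover have "\<rho> i l = - d_h h (\<lambda>m. hat (rk i) m * d i m) l" if "l \<in> {1..int N}" for l
    using assms that unfolding feasible_direction_def by (auto simp: eq_neg_iff_add_eq_0)
  ultimately show ?thesis
    using sum_d_h_by_parts[of N "\<lambda>m. ln (r i m) + 1" "\<lambda>m. hat (rk i) m * d i m" h]
    by (simp add: sum_negf D_h_def mult_ac)
qed

lemma first_variation_eq:
  assumes dir: "feasible_direction \<rho> d" and r: "\<forall>i\<in>{1..n}. periodic_grid N (r i)"
  shows "first_variation r w \<rho> d
       = h * (\<Sum>l\<in>{1..int N}. \<Sum>i\<in>{1..n}. hat (rk i) l * d i l * flux_gradient r w i l)"
proof -
  have "first_variation r w \<rho> d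
      = h * (\<Sum>l\<in>{1..int N}. \<Sum>i\<in>{1..n}.
          hat (rk i) l * d i l * (1 / dt * (\<Sum>j\<in>{1..n}. b i j * hat (rk j) l * (w i l - w j l))))
        + h * (\<Sum>i\<in>{1..n}. \<Sum>l\<in>{1..int N}. (ln (r i l) + 1) * \<rho> i l)"
    unfolding first_variation_def sum_coupling_mult_diff
    by (subst sum.swap[of _ "{1..n}"]) (simp add: sum_distrib_left algebra_simps)
  also have "(\<Sum>i\<in>{1..n}. \<Sum>l\<in>{1..int N}. (ln (r i l) + 1) * \<rho> i l)
      = (\<Sum>i\<in>{1..n}. \<Sum>l\<in>{1..int N}. hat (rk i) l * d i l * D_h h (\<lambda>m. ln (r i m)) l)"
    by (rule sum.cong[OF refl]) (use sum_ln_mult_direction[OF dir] r in blast)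
  also have "\<dots> = (\<Sum>l\<in>{1..int N}. \<Sum>i\<in>{1..n}. hat (rk i) l * d i l * D_h h (\<lambda>m. ln (r i m)) l)"
    by (rule sum.swap)
  also have "h * (\<Sum>l\<in>{1..int N}. \<Sum>i\<in>{1..n}.
          hat (rk i) l * d i l * (1 / dt * (\<Sum>j\<in>{1..n}. b i j * hat (rk j) l * (w i l - w j l))))
      + h * \<dots> = h * (\<Sum>l\<in>{1..int N}. \<Sum>i\<in>{1..n}. hat (rk i) l * d i l * flux_gradient r w i l)"
    by (simp add: flux_gradient_def distrib_left sum.distrib)
  finally show ?thesis .
qed

lemma J_le_of_flux_gradient_eq:
  assumes "feasible r w" and r: "\<forall>i\<in>{1..n}. \<forall>l\<in>{1..int N}. 0 < r i l"
    and grad: "\<forall>i\<in>{1..n}. \<forall>l\<in>{1..int N}. flux_gradient r w i l = S l"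
    and "feasible r' w'" and r': "\<forall>i\<in>{1..n}. \<forall>l\<in>{1..int N}. 0 < r' i l"
  shows "J r w \<le> J r' w'"
proof -
  let ?\<rho> = "\<lambda>i l. r' i l - r i l" and ?d = "\<lambda>i l. w' i l - w i l"
  have dir: "feasible_direction ?\<rho> ?d"
    using assms by (intro feasible_direction_diff)
  have "first_variation r w ?\<rho> ?d
      = h * (\<Sum>l\<in>{1..int N}. \<Sum>i\<in>{1..n}. hat (rk i) l * ?d i l * flux_gradient r w i l)"
    using first_variation_eq[OF dir] \<open>feasible r w\<close> unfolding feasible_def by blast
  also have "\<dots> = h * (\<Sum>l\<in>{1..int N}. S l * (\<Sum>i\<in>{1..n}. hat (rk i) l * ?d i l))"
    using grad by (simp add: sum_distrib_left mult.commute)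
  also have "\<dots> = 0"
    using dir unfolding feasible_direction_def by simp
  finally show ?thesis
    using J_ge_first_variation[OF r r', of w w'] by simp
qed

definition mean_log_gradient :: "(nat \<Rightarrow> int \<Rightarrow> real) \<Rightarrow> int \<Rightarrow> real" where
  "mean_log_gradient r l = (\<Sum>j\<in>{1..n}. hat (rk j) l * D_h h (\<lambda>m. ln (r j m)) l)"

lemma sum_hat_rk_flux_gradient:
  "(\<Sum>i\<in>{1..n}. hat (rk i) l * flux_gradient r w i l) = mean_log_gradient r l"
proof -
  have "(\<Sum>i\<in>{1..n}. \<Sum>j\<in>{1..n}. b i j * hat (rk i) l * hat (rk j) l * (w i l - w j l)) = 0"
    by (rule sum_sum_antisym_eq_0) (rule coupling_antisym)
  then have friction: "(\<Sum>i\<in>{1..n}. hat (rk i) l * (\<Sum>j\<in>{1..n}. b i j * hat (rk j) l * (w i l - w j l))) = 0"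
    by (simp add: sum_distrib_left algebra_simps)
  have "(\<Sum>i\<in>{1..n}. hat (rk i) l * flux_gradient r w i l)
      = mean_log_gradient r l
        + 1 / dt * (\<Sum>i\<in>{1..n}. hat (rk i) l * (\<Sum>j\<in>{1..n}. b i j * hat (rk j) l * (w i l - w j l)))"
    unfolding flux_gradient_def mean_log_gradient_def distrib_left sum.distrib
    by (simp add: sum_distrib_left mult.left_commute)
  with friction show ?thesis
    by simp
qed

lemma flux_gradient_eq_mean:
  assumes "\<forall>k\<in>{1..n}. flux_gradient r w k l = flux_gradient r w i l"
  shows "flux_gradient r w i l = mean_log_gradient r l"
proof -
  have "mean_log_gradient r l = (\<Sum>k\<in>{1..n}. hat (rk k) l * flux_gradient r w i l)"
    unfolding sum_hat_rk_flux_gradient[of l r w, symmetric] using assms by (intro sum.cong) simp_all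
  also have "\<dots> = flux_gradient r w i l"
    using hat_rk_sum by (simp add: sum_distrib_right[symmetric])
  finally show ?thesis ..
qed

section \<open>Mixing with the previous time step\<close>

definition min_density :: real where
  "min_density = Min ((\<lambda>(i, l). rk i l) ` ({1..n} \<times> {1..int N}))"

definition mix_threshold :: real where
  "mix_threshold = exp (2 * real n * real N * ln min_density / min_density) / 4"

lemma n_pos: "0 < n"
  using rk_sum[of 0] by (cases n) auto

lemma rk_le_one: "i \<in> {1..n} \<Longrightarrow> rk i l \<le> 1"
  using member_le_sum[of i "{1..n}" "\<lambda>i. rk i l"] rk_pos rk_sum by (simp add: less_imp_le)

lemma min_density_le: "i \<in> {1..n} \<Longrightarrow> l \<in> {1..int N} \<Longrightarrow> min_density \<le> rk i l"
  unfolding min_density_def by (intro Min_le) auto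

lemma min_density_pos: "0 < min_density"
  unfolding min_density_def using n_pos N_pos rk_pos by (subst Min_gr_iff) auto

lemma min_density_le_one: "min_density \<le> 1"
  using min_density_le[of 1 1] rk_le_one[of 1 1] n_pos N_pos by simp

lemma mix_threshold_pos: "0 < mix_threshold"
  unfolding mix_threshold_def by simp

lemma mix_threshold_le: "mix_threshold \<le> min_density / 4"
proof -
  let ?m = min_density
  have "1 \<le> real (n * N)"
    using n_pos N_pos by (simp del: of_nat_mult)
  then have "1 \<le> 2 * real n * real N / ?m"
    using min_density_pos min_density_le_one by (simp add: le_divide_eq)
  moreover have "ln ?m \<le> 0"
    using min_density_pos min_density_le_one by simp
  ultimately have "2 * real n * real N * ln ?m / ?m \<le> ln ?m"
    using mult_right_mono_neg[of 1 "2 * real n * real N / ?m" "ln ?m"] by simp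
  then have "exp (2 * real n * real N * ln ?m / ?m) \<le> ?m"
    using min_density_pos by (metis exp_le_cancel_iff exp_ln)
  then show ?thesis
    unfolding mix_threshold_def by simp
qed

lemma mix_threshold_small:
  assumes "0 < a" "a \<le> mix_threshold"
  shows "real n * real N * (- ln min_density) + min_density / 2 * ln (2 * a) < 0"
proof -
  let ?m = min_density and ?E = "2 * real n * real N * ln min_density / min_density"
  have "2 * a < exp ?E"
    using assms unfolding mix_threshold_def by simp
  then have "ln (2 * a) < ?E"
    using assms by (metis exp_less_cancel_iff exp_ln mult_pos_pos zero_less_numeral)
  then have "?m / 2 * ln (2 * a) < ?m / 2 * ?E"
    using min_density_pos by (intro mult_strict_left_mono) simp_all
  also have "\<dots> = real n * real N * ln ?m"
    using min_density_pos by simp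
  finally show ?thesis
    by simp
qed

lemma ln_mix_mult_diff_le_bound:
  assumes r: "\<forall>i\<in>{1..n}. \<forall>l\<in>{1..int N}. 0 < r i l"
    and r_sum: "\<forall>l\<in>{1..int N}. (\<Sum>i\<in>{1..n}. r i l) = 1"
    and "a = r i0 l0" "0 < a" "a \<le> min_density / 2" "a \<le> 1 / 4"
    and i: "i \<in> {1..n}" and l: "l \<in> {1..int N}"
  shows "ln ((1 - a) * r i l + a * rk i l) * (rk i l - r i l)
         \<le> - ln min_density + (if l = l0 then if i = i0 then min_density / 2 * ln (2 * a) else 0 else 0)"
proof (cases "i = i0 \<and> l = l0")
  case True
  have "ln ((1 - a) * r i l + a * rk i l) * (rk i l - r i l) \<le> min_density / 2 * ln (2 * a)"
    using ln_mix_mult_diff_le_small[of a min_density "rk i l"] min_density_le[OF i l] rk_le_one[OF i]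
      assms True by simp
  moreover have "ln min_density \<le> 0"
    using min_density_pos min_density_le_one by simp
  ultimately show ?thesis
    using True by simp
next
  case False
  have "r i l \<le> 1"
    using member_le_sum[of i "{1..n}" "\<lambda>i. r i l"] r r_sum i l by (simp add: less_imp_le)
  then have "ln ((1 - a) * r i l + a * rk i l) * (rk i l - r i l) \<le> - ln min_density"
    using assms min_density_pos min_density_le[OF i l] rk_le_one[OF i]
    by (intro ln_mix_mult_diff_le) auto
  with False show ?thesis
    by auto
qed

lemma entropy_mix_le:
  assumes r: "\<forall>i\<in>{1..n}. \<forall>l\<in>{1..int N}. 0 < r i l"
    and r_sum: "\<forall>l\<in>{1..int N}. (\<Sum>i\<in>{1..n}. r i l) = 1"
    and i0: "i0 \<in> {1..n}" and l0: "l0 \<in> {1..int N}" and a: "a = r i0 l0"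
    and a_le: "a \<le> min_density / 2" "a \<le> 1 / 4"
  shows "entropy (\<lambda>i l. (1 - a) * r i l + a * rk i l)
         \<le> entropy r + a * (real n * real N * (- ln min_density) + min_density / 2 * ln (2 * a))"
proof -
  let ?m = min_density and ?y = "\<lambda>i l. (1 - a) * r i l + a * rk i l"
  let ?bound = "\<lambda>i l. - ln ?m + (if l = l0 then if i = i0 then ?m / 2 * ln (2 * a) else 0 else 0)"
  have "0 < a"
    using r i0 l0 a by simp
  have y_pos: "0 < ?y i l" if "i \<in> {1..n}" "l \<in> {1..int N}" for i l
    using r rk_pos \<open>0 < a\<close> a_le that by (intro add_pos_pos mult_pos_pos) auto
  have "entropy ?y - entropy r
      \<le> - (\<Sum>l\<in>{1..int N}. \<Sum>i\<in>{1..n}. (ln (?y i l) + 1) * (r i l - ?y i l))"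
    using entropy_ge_tangent[of ?y r] y_pos r by simp
  also have "\<dots> = a * (\<Sum>l\<in>{1..int N}. \<Sum>i\<in>{1..n}. ln (?y i l) * (rk i l - r i l))
       + a * (\<Sum>l\<in>{1..int N}. (\<Sum>i\<in>{1..n}. rk i l) - (\<Sum>i\<in>{1..n}. r i l))"
    by (simp add: sum_distrib_left sum_subtractf[symmetric] sum.distrib[symmetric] sum_negf[symmetric]
        algebra_simps)
  also have "(\<Sum>l\<in>{1..int N}. (\<Sum>i\<in>{1..n}. rk i l) - (\<Sum>i\<in>{1..n}. r i l)) = 0"
    using rk_sum r_sum by simp
  also have "(\<Sum>l\<in>{1..int N}. \<Sum>i\<in>{1..n}. ln (?y i l) * (rk i l - r i l))
      \<le> (\<Sum>l\<in>{1..int N}. \<Sum>i\<in>{1..n}. ?bound i l)"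
    using ln_mix_mult_diff_le_bound[OF r r_sum a \<open>0 < a\<close> a_le] by (intro sum_mono) auto
  also have "\<dots> = real n * real N * (- ln ?m) + ?m / 2 * ln (2 * a)"
  proof -
    have "(\<Sum>i\<in>{1..n}. if l = l0 then if i = i0 then ?m / 2 * ln (2 * a) else 0 else 0)
        = (if l = l0 then ?m / 2 * ln (2 * a) else 0)" for l
      using i0 by simp
    then show ?thesis
      using l0 by (simp only: sum.distrib) simp
  qed
  finally show ?thesis
    using \<open>0 < a\<close> by (simp add: mult_left_mono)
qed

lemma J_mix_less:
  assumes "feasible r w" and r: "\<forall>i\<in>{1..n}. \<forall>l\<in>{1..int N}. 0 < r i l"
    and "i0 \<in> {1..n}" "l0 \<in> {1..int N}" "a = r i0 l0" "a \<le> mix_threshold"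
  shows "J (\<lambda>i l. (1 - a) * r i l + a * rk i l) (\<lambda>i l. (1 - a) * w i l) < J r w"
proof -
  have "0 < a"
    using assms by simp
  have "a \<le> min_density / 2" "a \<le> 1 / 4"
    using \<open>a \<le> mix_threshold\<close> mix_threshold_le min_density_pos min_density_le_one by auto
  have "entropy (\<lambda>i l. (1 - a) * r i l + a * rk i l)
      \<le> entropy r + a * (real n * real N * (- ln min_density) + min_density / 2 * ln (2 * a))"
    using assms \<open>a \<le> min_density / 2\<close> \<open>a \<le> 1 / 4\<close> unfolding feasible_def
    by (intro entropy_mix_le) auto
  also have "\<dots> < entropy r"
    using mix_threshold_small[OF \<open>0 < a\<close> \<open>a \<le> mix_threshold\<close>] \<open>0 < a\<close>
    by (simp add: mult_pos_neg)
  finally have entropy: "entropy (\<lambda>i l. (1 - a) * r i l + a * rk i l) < entropy r" .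
  have "(1 - a)\<^sup>2 * dissipation w \<le> 1 * dissipation w"
    using dissipation_nonneg \<open>0 < a\<close> \<open>a \<le> 1 / 4\<close>
    by (intro mult_right_mono) (auto simp: power_le_one)
  then have "dissipation (\<lambda>i l. (1 - a) * w i l) \<le> dissipation w"
    by (simp add: dissipation_cmult)
  with entropy show ?thesis
    unfolding J_fun_eq using h_pos dt_pos
    by (intro add_le_less_mono mult_left_mono mult_strict_left_mono) auto
qed

lemma K_minimizer_gt:
  assumes "0 < \<delta>" "\<delta> \<le> mix_threshold" and K: "(r, w) \<in> K_set n N h \<delta> rk"
    and min: "\<forall>(r', w') \<in> K_set n N h \<delta> rk. J r w \<le> J r' w'"
  shows "\<forall>i\<in>{1..n}. \<forall>l\<in>{1..int N}. \<delta> < r i l"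
proof (rule ccontr)
  assume "\<not> ?thesis"
  then obtain i0 l0 where i0: "i0 \<in> {1..n}" and l0: "l0 \<in> {1..int N}" and "r i0 l0 \<le> \<delta>"
    by (auto simp: not_less)
  have feas: "feasible r w" and r_ge: "\<forall>i\<in>{1..n}. \<forall>l\<in>{1..int N}. \<delta> \<le> r i l"
    using K unfolding K_set_iff by auto
  define a where "a = r i0 l0"
  have "a = \<delta>"
    using \<open>r i0 l0 \<le> \<delta>\<close> r_ge i0 l0 unfolding a_def by force
  have "a < 1"
    using \<open>a = \<delta>\<close> assms mix_threshold_le min_density_le_one by simp
  have "\<delta> \<le> (1 - a) * r i l + a * rk i l" if "i \<in> {1..n}" "l \<in> {1..int N}" for i l
  proof -
    have "\<delta> \<le> rk i l"
      using assms mix_threshold_le min_density_pos min_density_le[OF that] by simp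
    then have "(1 - a) * \<delta> + a * \<delta> \<le> (1 - a) * r i l + a * rk i l"
      using r_ge that \<open>a < 1\<close> \<open>a = \<delta>\<close> \<open>0 < \<delta>\<close> by (intro add_mono mult_left_mono) auto
    then show ?thesis
      by (simp add: algebra_simps)
  qed
  then have "((\<lambda>i l. (1 - a) * r i l + a * rk i l), (\<lambda>i l. (1 - a) * w i l)) \<in> K_set n N h \<delta> rk"
    unfolding K_set_iff using feasible_mix[OF feas] by blast
  moreover have "J (\<lambda>i l. (1 - a) * r i l + a * rk i l) (\<lambda>i l. (1 - a) * w i l) < J r w"
    using feas r_ge \<open>0 < \<delta>\<close> i0 l0 a_def \<open>a = \<delta>\<close> assms(2)
    by (intro J_mix_less) (auto intro: less_le_trans)
  ultimately show False
    using min by fastforce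
qed

section \<open>First-order conditions at a minimizer\<close>

lemma K_minimizer_first_variation_eq_0:
  assumes K: "(r, w) \<in> K_set n N h \<delta> rk"
    and min: "\<forall>(r', w') \<in> K_set n N h \<delta> rk. J r w \<le> J r' w'"
    and gt: "\<forall>i\<in>{1..n}. \<forall>l\<in>{1..int N}. \<delta> < r i l" and "0 < \<delta>"
    and dir: "feasible_direction \<rho> d"
  shows "first_variation r w \<rho> d = 0"
proof -
  have "\<forall>\<^sub>F e in nhds 0. \<forall>i\<in>{1..n}. \<forall>l\<in>{1..int N}. \<delta> < r i l + e * \<rho> i l"
  proof (intro eventually_ball_finite ballI)
    fix i l assume "i \<in> {1..n}" "l \<in> {1..int N}"
    have "((\<lambda>e. r i l + e * \<rho> i l) \<longlongrightarrow> r i l + 0 * \<rho> i l) (nhds 0)"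
      by (intro tendsto_intros filterlim_ident)
    then show "\<forall>\<^sub>F e in nhds 0. \<delta> < r i l + e * \<rho> i l"
      using gt \<open>i \<in> {1..n}\<close> \<open>l \<in> {1..int N}\<close> by (intro order_tendstoD(1)) auto
  qed simp_all
  then obtain \<epsilon> where "0 < \<epsilon>"
    and near: "\<And>e. dist e 0 < \<epsilon> \<Longrightarrow> \<forall>i\<in>{1..n}. \<forall>l\<in>{1..int N}. \<delta> < r i l + e * \<rho> i l"
    unfolding eventually_nhds_metric by blast
  have "J r w \<le> J (\<lambda>i l. r i l + e * \<rho> i l) (\<lambda>i l. w i l + e * d i l)" if "\<bar>0 - e\<bar> < \<epsilon>" for e
  proof -
    have "((\<lambda>i l. r i l + e * \<rho> i l), (\<lambda>i l. w i l + e * d i l)) \<in> K_set n N h \<delta> rk"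
      using K near[of e] that feasible_add_direction[OF _ dir]
      by (auto simp: K_set_iff dist_real_def less_imp_le)
    then show ?thesis
      using min by fastforce
  qed
  moreover have "\<forall>i\<in>{1..n}. \<forall>l\<in>{1..int N}. 0 < r i l"
    using gt \<open>0 < \<delta>\<close> by (auto intro: less_trans)
  ultimately show ?thesis
    using DERIV_local_min[OF J_along_line_has_derivative \<open>0 < \<epsilon>\<close>] by simp
qed

definition exchange_flux :: "nat \<Rightarrow> nat \<Rightarrow> int \<Rightarrow> nat \<Rightarrow> int \<Rightarrow> real" where
  "exchange_flux i k l0 j l =
     (if l mod int N = l0 mod int N then (if j = i then 1 else 0) - (if j = k then 1 else 0) else 0)"

lemma feasible_direction_exchange:
  assumes "i \<in> {1..n}" "k \<in> {1..n}"
  shows "feasible_direction (\<lambda>j l. - d_h h (exchange_flux i k l0 j) l)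
           (\<lambda>j l. exchange_flux i k l0 j l / hat (rk j) l)"
proof -
  let ?\<phi> = "exchange_flux i k l0"
  have periodic: "periodic_grid N (?\<phi> j)" for j
    unfolding periodic_grid_def exchange_flux_def by simp
  have flux: "(\<lambda>m. hat (rk j) m * (?\<phi> j m / hat (rk j) m)) = ?\<phi> j" if "j \<in> {1..n}" for j
    using hat_rk_pos[OF that, THEN less_imp_neq, THEN not_sym] by (simp add: fun_eq_iff)
  have balance: "(\<Sum>j\<in>{1..n}. ?\<phi> j l) = 0" for l
    using assms by (cases "l mod int N = l0 mod int N") (simp_all add: exchange_flux_def sum_subtractf)
  then have "(\<Sum>j\<in>{1..n}. hat (rk j) l * (?\<phi> j l / hat (rk j) l)) = 0" for l
    using flux by (simp add: fun_eq_iff)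
  moreover have "(\<Sum>j\<in>{1..n}. - d_h h (?\<phi> j) l) = 0" for l
    using balance d_h_sum[of h ?\<phi> "{1..n}" l] by (simp add: sum_negf d_h_def)
  moreover have "periodic_grid N (\<lambda>l. - d_h h (?\<phi> j) l)" "periodic_grid N (\<lambda>l. ?\<phi> j l / hat (rk j) l)"
    if "j \<in> {1..n}" for j
    using periodic_grid_d_h[OF periodic] periodic periodic_grid_hat[OF rk_periodic[OF that]]
    unfolding periodic_grid_def by simp_all
  ultimately show ?thesis
    unfolding feasible_direction_def using flux by simp
qed

lemma first_variation_exchange:
  assumes i: "i \<in> {1..n}" and k: "k \<in> {1..n}" and l0: "l0 \<in> {1..int N}"
    and r: "\<forall>j\<in>{1..n}. periodic_grid N (r j)"
  shows "first_variation r w (\<lambda>j l. - d_h h (exchange_flux i k l0 j) l)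
           (\<lambda>j l. exchange_flux i k l0 j l / hat (rk j) l)
         = h * (flux_gradient r w i l0 - flux_gradient r w k l0)"
proof -
  let ?\<phi> = "exchange_flux i k l0" and ?g = "flux_gradient r w"
  have "(\<Sum>j\<in>{1..n}. hat (rk j) l * (?\<phi> j l / hat (rk j) l) * ?g j l) = (\<Sum>j\<in>{1..n}. ?\<phi> j l * ?g j l)" for l
    using hat_rk_pos[THEN less_imp_neq, THEN not_sym] by (intro sum.cong) simp_all
  moreover have "(\<Sum>j\<in>{1..n}. ?\<phi> j l * ?g j l) = (if l = l0 then ?g i l0 - ?g k l0 else 0)"
    if "l \<in> {1..int N}" for l
  proof -
    have delta: "(if P then 1 else 0) * x = (if P then x else 0)" for P and x :: real
      by simp
    show ?thesis
      using i k grid_mod_eq_iff[OF that l0]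
      by (cases "l = l0") (simp_all add: exchange_flux_def left_diff_distrib sum_subtractf delta)
  qed
  ultimately show ?thesis
    using first_variation_eq[OF feasible_direction_exchange[OF i k] r] l0 by simp
qed

lemma K_minimizer_flux_gradient_eq:
  assumes "0 < \<delta>" "\<delta> \<le> mix_threshold" and K: "(r, w) \<in> K_set n N h \<delta> rk"
    and min: "\<forall>(r', w') \<in> K_set n N h \<delta> rk. J r w \<le> J r' w'"
    and i: "i \<in> {1..n}" and k: "k \<in> {1..n}" and l: "l \<in> {1..int N}"
  shows "flux_gradient r w i l = flux_gradient r w k l"
proof -
  have "\<forall>j\<in>{1..n}. periodic_grid N (r j)"
    using K unfolding K_set_iff feasible_def by blast
  then have "h * (flux_gradient r w i l - flux_gradient r w k l)
      = first_variation r w (\<lambda>j m. - d_h h (exchange_flux i k l j) m)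
          (\<lambda>j m. exchange_flux i k l j m / hat (rk j) m)"
    using first_variation_exchange[OF i k l] by simp
  also have "\<dots> = 0"
    using K min K_minimizer_gt[OF assms(1-4)] \<open>0 < \<delta>\<close> feasible_direction_exchange[OF i k]
    by (rule K_minimizer_first_variation_eq_0)
  finally show ?thesis
    using h_pos by simp
qed

lemma K_minimizer_iff:
  assumes "0 < \<delta>" "\<delta> \<le> mix_threshold" and r: "\<forall>i\<in>{1..n}. \<forall>l\<in>{1..int N}. 0 < r i l"
  shows "(\<exists>w. (r, w) \<in> K_set n N h \<delta> rk \<and> (\<forall>(r', w') \<in> K_set n N h \<delta> rk. J r w \<le> J r' w'))
     \<longleftrightarrow> (\<exists>w. feasible r w \<and> (\<forall>i\<in>{1..n}. \<forall>l\<in>{1..int N}. flux_gradient r w i l = mean_log_gradient r l))"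
proof
  assume "\<exists>w. (r, w) \<in> K_set n N h \<delta> rk \<and> (\<forall>(r', w') \<in> K_set n N h \<delta> rk. J r w \<le> J r' w')"
  then obtain w where K: "(r, w) \<in> K_set n N h \<delta> rk"
    and min: "\<forall>(r', w') \<in> K_set n N h \<delta> rk. J r w \<le> J r' w'"
    by blast
  have "flux_gradient r w i l = mean_log_gradient r l" if "i \<in> {1..n}" "l \<in> {1..int N}" for i l
    using K_minimizer_flux_gradient_eq[OF assms(1,2) K min _ that(1) that(2)]
    by (intro flux_gradient_eq_mean) blast
  with K show "\<exists>w. feasible r w \<and> (\<forall>i\<in>{1..n}. \<forall>l\<in>{1..int N}. flux_gradient r w i l = mean_log_gradient r l)"
    unfolding K_set_iff by blast
next
  assume "\<exists>w. feasible r w \<and> (\<forall>i\<in>{1..n}. \<forall>l\<in>{1..int N}. flux_gradient r w i l = mean_log_gradient r l)"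
  then obtain w where feas: "feasible r w"
    and grad: "\<forall>i\<in>{1..n}. \<forall>l\<in>{1..int N}. flux_gradient r w i l = mean_log_gradient r l"
    by blast
  have min: "J r w \<le> J r' w'"
    if "feasible r' w'" "\<forall>i\<in>{1..n}. \<forall>l\<in>{1..int N}. 0 < r' i l" for r' w'
    using feas r grad that by (rule J_le_of_flux_gradient_eq)
  have "\<delta> \<le> r i l" if i: "i \<in> {1..n}" and l: "l \<in> {1..int N}" for i l
  proof (rule ccontr)
    assume "\<not> \<delta> \<le> r i l"
    define a where "a = r i l"
    have "0 < a" "a < 1" "a \<le> mix_threshold"
      using \<open>\<not> \<delta> \<le> r i l\<close> assms i l mix_threshold_le min_density_le_one unfolding a_def by auto
    have "0 < (1 - a) * r j m + a * rk j m" if "j \<in> {1..n}" "m \<in> {1..int N}" for j m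
      using r rk_pos \<open>0 < a\<close> \<open>a < 1\<close> that by (intro add_pos_pos mult_pos_pos) auto
    then have "J r w \<le> J (\<lambda>i l. (1 - a) * r i l + a * rk i l) (\<lambda>i l. (1 - a) * w i l)"
      using feasible_mix[OF feas] by (intro min) auto
    moreover have "J (\<lambda>i l. (1 - a) * r i l + a * rk i l) (\<lambda>i l. (1 - a) * w i l) < J r w"
      using feas r i l a_def \<open>a \<le> mix_threshold\<close> by (rule J_mix_less)
    ultimately show False
      by simp
  qed
  with feas have "(r, w) \<in> K_set n N h \<delta> rk"
    unfolding K_set_iff by blast
  moreover have "J r w \<le> J r' w'" if "(r', w') \<in> K_set n N h \<delta> rk" for r' w'
    using that \<open>0 < \<delta>\<close> unfolding K_set_iff by (auto intro!: min elim!: less_le_trans)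
  ultimately show "\<exists>w. (r, w) \<in> K_set n N h \<delta> rk \<and> (\<forall>(r', w') \<in> K_set n N h \<delta> rk. J r w \<le> J r' w')"
    by blast
qed

section \<open>The scheme\<close>

lemma d_h_hat_rk_cmult:
  "d_h h (\<lambda>m. hat (rk i) m * (c * v m)) l = c * d_h h (\<lambda>m. hat (rk i) m * v m) l"
  using d_h_cmult[of h c "\<lambda>m. hat (rk i) m * v m" l] by (simp add: mult.left_commute)

lemma feasible_of_scheme_solution:
  assumes "scheme_solution n N h dt b rk r" "\<forall>i\<in>{1..n}. periodic_grid N (r i)"
  shows "\<exists>w. feasible r w \<and> (\<forall>i\<in>{1..n}. \<forall>l\<in>{1..int N}. flux_gradient r w i l = mean_log_gradient r l)"
proof -
  obtain v where v_periodic: "\<forall>i\<in>{1..n}. periodic_grid N (v i)"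
    and mass: "\<And>i l. i \<in> {1..n} \<Longrightarrow> (r i l - rk i l) / dt + d_h h (\<lambda>m. hat (rk i) m * v i m) l = 0"
    and friction: "\<And>i l. i \<in> {1..n} \<Longrightarrow> - (\<Sum>j\<in>{1..n}. b i j * hat (rk j) l * (v i l - v j l))
        = D_h h (\<lambda>m. ln (r i m)) l - (1 / (\<Sum>j\<in>{1..n}. hat (rk j) l))
            * (\<Sum>j\<in>{1..n}. hat (rk j) l * D_h h (\<lambda>m. ln (r j m)) l)"
    and v_sum: "\<And>l. (\<Sum>j\<in>{1..n}. hat (rk j) l * v j l) = 0"
    using assms unfolding scheme_solution_def by blast
  define w where "w i l = dt * v i l" for i l
  have w_mass: "r i l - rk i l + d_h h (\<lambda>m. hat (rk i) m * w i m) l = 0" if "i \<in> {1..n}" for i l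
    using mass[OF that, of l] dt_pos unfolding w_def d_h_hat_rk_cmult by (simp add: field_simps)
  have w_sum: "(\<Sum>j\<in>{1..n}. hat (rk j) l * w j l) = 0" for l
    using v_sum[of l] unfolding w_def by (simp add: sum_distrib_left[symmetric] mult.left_commute)
  have "(\<Sum>i\<in>{1..n}. r i l - rk i l + d_h h (\<lambda>m. hat (rk i) m * w i m) l) = 0" for l
    using w_mass by simp
  then have "(\<Sum>i\<in>{1..n}. r i l) - (\<Sum>i\<in>{1..n}. rk i l) + d_h h (\<lambda>m. \<Sum>i\<in>{1..n}. hat (rk i) m * w i m) l = 0" for l
    by (simp add: d_h_sum sum.distrib sum_subtractf)
  then have r_sum: "(\<Sum>i\<in>{1..n}. r i l) = 1" for l
    using rk_sum w_sum by (simp add: d_h_def)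
  have "flux_gradient r w i l = mean_log_gradient r l" if "i \<in> {1..n}" for i l
    using friction[OF that, of l] dt_pos
    unfolding flux_gradient_def mean_log_gradient_def hat_rk_sum w_def
    by (simp add: sum_distrib_left[symmetric] right_diff_distrib[symmetric] mult.left_commute)
  moreover have "\<forall>i\<in>{1..n}. periodic_grid N (w i)"
    using v_periodic unfolding w_def periodic_grid_def by simp
  ultimately show ?thesis
    using w_mass w_sum r_sum assms unfolding feasible_def scheme_solution_def by blast
qed

lemma feasible_equations_everywhere:
  assumes r_periodic: "\<forall>i\<in>{1..n}. periodic_grid N (r i)" and feas: "feasible r w"
    and grad: "\<forall>i\<in>{1..n}. \<forall>l\<in>{1..int N}. flux_gradient r w i l = mean_log_gradient r l"
  shows "\<forall>i\<in>{1..n}. \<forall>l. r i l - rk i l + d_h h (\<lambda>m. hat (rk i) m * w i m) l = 0"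
    and "\<forall>l. (\<Sum>j\<in>{1..n}. hat (rk j) l * w j l) = 0"
    and "\<forall>i\<in>{1..n}. \<forall>l. flux_gradient r w i l = mean_log_gradient r l"
proof -
  have w_periodic: "\<forall>i\<in>{1..n}. periodic_grid N (w i)"
    using feas unfolding feasible_def by blast
  have "(\<lambda>l. r i l - rk i l + d_h h (\<lambda>m. hat (rk i) m * w i m) l) = (\<lambda>_. 0)" if "i \<in> {1..n}" for i
    using feas that r_periodic w_periodic rk_periodic unfolding feasible_def
    by (intro periodic_grid_eqI[OF N_pos] periodic_grid_intros) auto
  then show "\<forall>i\<in>{1..n}. \<forall>l. r i l - rk i l + d_h h (\<lambda>m. hat (rk i) m * w i m) l = 0"
    by (simp add: fun_eq_iff)
  have "(\<lambda>l. \<Sum>j\<in>{1..n}. hat (rk j) l * w j l) = (\<lambda>_. 0)"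
    using feas w_periodic rk_periodic unfolding feasible_def
    by (intro periodic_grid_eqI[OF N_pos] periodic_grid_intros) auto
  then show "\<forall>l. (\<Sum>j\<in>{1..n}. hat (rk j) l * w j l) = 0"
    by (simp add: fun_eq_iff)
  have "flux_gradient r w i = mean_log_gradient r" if "i \<in> {1..n}" for i
    using grad that r_periodic w_periodic rk_periodic
    unfolding flux_gradient_def[abs_def] mean_log_gradient_def[abs_def]
    by (intro periodic_grid_eqI[OF N_pos] periodic_grid_intros) auto
  then show "\<forall>i\<in>{1..n}. \<forall>l. flux_gradient r w i l = mean_log_gradient r l"
    by simp
qed

lemma scheme_solution_of_feasible:
  assumes "\<forall>i\<in>{1..n}. periodic_grid N (r i)" "feasible r w"
    and "\<forall>i\<in>{1..n}. \<forall>l\<in>{1..int N}. flux_gradient r w i l = mean_log_gradient r l"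
  shows "scheme_solution n N h dt b rk r"
proof -
  note mass = feasible_equations_everywhere(1)[OF assms, rule_format]
    and w_sum = feasible_equations_everywhere(2)[OF assms, rule_format]
    and friction = feasible_equations_everywhere(3)[OF assms, rule_format]
  have w_periodic: "\<forall>i\<in>{1..n}. periodic_grid N (w i)"
    using assms unfolding feasible_def by blast
  define v where "v i l = w i l / dt" for i l
  have d_h_v: "d_h h (\<lambda>m. hat (rk i) m * v i m) l = d_h h (\<lambda>m. hat (rk i) m * w i m) l / dt" for i l
    using d_h_hat_rk_cmult[of i "1 / dt" "w i" l] unfolding v_def by simp
  have friction_v: "(\<Sum>j\<in>{1..n}. b i j * hat (rk j) l * (v i l - v j l))
      = (\<Sum>j\<in>{1..n}. b i j * hat (rk j) l * (w i l - w j l)) / dt" for i l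
    unfolding v_def by (simp add: sum_divide_distrib diff_divide_distrib[symmetric])
  show ?thesis
    unfolding scheme_solution_def
  proof (intro exI[of _ v] conjI ballI allI)
    fix i assume "i \<in> {1..n}"
    then show "periodic_grid N (v i)"
      using w_periodic unfolding v_def periodic_grid_def by simp
    fix l
    show "(r i l - rk i l) / dt + d_h h (\<lambda>m. hat (rk i) m * v i m) l = 0"
      using mass[OF \<open>i \<in> {1..n}\<close>, of l] unfolding d_h_v
      by (simp add: add_divide_distrib[symmetric])
    show "- (\<Sum>j\<in>{1..n}. b i j * hat (rk j) l * (v i l - v j l))
        = D_h h (\<lambda>m. ln (r i m)) l - 1 / (\<Sum>j\<in>{1..n}. hat (rk j) l)
            * (\<Sum>j\<in>{1..n}. hat (rk j) l * D_h h (\<lambda>m. ln (r j m)) l)"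
      using friction[OF \<open>i \<in> {1..n}\<close>, of l] hat_rk_sum[of l]
      unfolding friction_v flux_gradient_def mean_log_gradient_def by simp
  next
    fix l
    show "(\<Sum>j\<in>{1..n}. hat (rk j) l * v j l) = 0"
      using w_sum[of l] unfolding v_def by (simp add: sum_divide_distrib[symmetric])
  qed
qed

lemma scheme_solution_iff_K_minimizer:
  assumes "0 < \<delta>" "\<delta> \<le> mix_threshold"
    and "\<forall>i\<in>{1..n}. periodic_grid N (r i)" "\<forall>i\<in>{1..n}. \<forall>l. 0 < r i l"
  shows "scheme_solution n N h dt b rk r
     \<longleftrightarrow> (\<exists>w. (r, w) \<in> K_set n N h \<delta> rk \<and> (\<forall>(r', w') \<in> K_set n N h \<delta> rk. J r w \<le> J r' w'))"
proof -
  have "scheme_solution n N h dt b rk r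
      \<longleftrightarrow> (\<exists>w. feasible r w \<and> (\<forall>i\<in>{1..n}. \<forall>l\<in>{1..int N}. flux_gradient r w i l = mean_log_gradient r l))"
    using feasible_of_scheme_solution scheme_solution_of_feasible assms(3) by blast
  also have "\<dots> \<longleftrightarrow> (\<exists>w. (r, w) \<in> K_set n N h \<delta> rk \<and> (\<forall>(r', w') \<in> K_set n N h \<delta> rk. J r w \<le> J r' w'))"
    using K_minimizer_iff[OF assms(1,2)] assms(4) by simp
  finally show ?thesis .
qed

end

theorem theorem3p1:
  fixes n N :: nat and L dt :: real
    and b :: "nat \<Rightarrow> nat \<Rightarrow> real"
    and rk :: "nat \<Rightarrow> int \<Rightarrow> real"
  assumes "n \<ge> 2" and "N \<ge> 1" and "L > 0" and "dt > 0"
    and "\<forall>i\<in>{1..n}. \<forall>j\<in>{1..n}. i \<noteq> j \<longrightarrow> b i j > 0 \<and> b i j = b j i"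
    and "\<forall>i\<in>{1..n}. periodic_grid N (rk i)"
    and "\<forall>i\<in>{1..n}. \<forall>l. rk i l > 0"
    and "\<forall>l. (\<Sum>i\<in>{1..n}. rk i l) = 1"
  shows "\<exists>\<delta>0 > 0. \<forall>\<delta>. 0 < \<delta> \<and> \<delta> \<le> \<delta>0 \<longrightarrow>
     (\<forall>r :: nat \<Rightarrow> int \<Rightarrow> real.
        (\<forall>i\<in>{1..n}. periodic_grid N (r i)) \<and> (\<forall>i\<in>{1..n}. \<forall>l. r i l > 0) \<longrightarrow>
        (scheme_solution n N (L / real N) dt b rk r \<longleftrightarrow>
         (\<exists>w. (r, w) \<in> K_set n N (L / real N) \<delta> rk \<and>
              (\<forall>(r', w') \<in> K_set n N (L / real N) \<delta> rk.
                 J_fun n N (L / real N) dt b rk r w \<le> J_fun n N (L / real N) dt b rk r' w'))))"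
proof -
  interpret maxwell_stefan_step n N "L / real N" dt b rk
    using assms by unfold_locales (auto simp: less_imp_le)
  show ?thesis
    by (intro exI[of _ mix_threshold] conjI allI impI mix_threshold_pos scheme_solution_iff_K_minimizer)
      auto
qed

end
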